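(* Let $\mathbb{S}=(S,\Sigma,\{\tau_a\mid a\in L\})$ be an LMP, let $\Sigma_0\subseteq\Sigma$ be a sub-$\sigma$-algebra with $\mathcal{R}(\Sigma_0)=\mathcal{R}^T(\Sigma_0)$, and put $R_0=\mathcal{R}(\Sigma_0)$. Then for every limit ordinal $\lambda$, $\Sigma_\lambda$ is a stable $\sigma$-algebra.
   Context: An LMP is a triple $(S,\Sigma,\{\tau_a\mid a\in L\})$ with $(S,\Sigma)$ a measurable space, $L$ countable, and each $\tau_a:S\times\Sigma\to[0,1]$ a Markov kernel (subprobability measure in the second argument, measurable in the first). For $R\subseteq S\times S$, $A$ is $R$-closed if $x\in A$, $xRs$ imply $s\in A$; $\Sigma(R)$ is the family of $R$-closed members of $\Sigma$. For $\Gamma\subseteq\mathcal{P}(S)$, $\mathcal{R}(\Gamma)=\{(s,t):\forall A\in\Gamma\,(s\in A\iff t\in A)\}$; for $\Lambda\subseteq\Sigma$, $\mathcal{R}^T(\Lambda)=\{(s,t):\forall a\in L\,\forall E\in\Lambda\ \tau_a(s,E)=\tau_a(t,E)\}$. $\mathcal{O}(R)=\mathcal{R}^T(\Sigma(R))$, $\mathcal{G}(\Lambda)=\Sigma(\mathcal{R}^T(\Lambda))$. Iterates: $R_{\alpha+1}=\mathcal{O}(R_\alpha)$, $R_\lambda=\bigcap_{\alpha<\lambda}R_\alpha$ for limit $\lambda$; $\Sigma_{\alpha+1}=\mathcal{G}(\Sigma_\alpha)$, $\Sigma_\lambda=\sigma(\bigcup_{\alpha<\lambda}\Sigma_\alpha)$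 for limit $\lambda$. A family $\Lambda\subseteq\Sigma$ is stable if for all $A\in\Lambda$, rational $r\in[0,1]$ and $a\in L$, $\{s:\tau_a(s,A)>r\}\in\Lambda$. *)

theory Defs
  imports "HOL-Probability.Probability"
begin

definition LMP :: "'a measure \<Rightarrow> 'l set \<Rightarrow> ('l \<Rightarrow> 'a \<Rightarrow> 'a measure) \<Rightarrow> bool" where
  "LMP M L \<tau> \<longleftrightarrow> countable L \<and> (\<forall>a\<in>L. \<tau> a \<in> M \<rightarrow>\<^sub>M subprob_algebra M)"

definition Rel_of :: "'a measure \<Rightarrow> 'a set set \<Rightarrow> ('a \<times> 'a) set" where
  "Rel_of M \<Gamma> = {(s,t). s \<in> space M \<and> t \<in> space M \<and> (\<forall>A\<in>\<Gamma>. s \<in> A \<longleftrightarrow> t \<in> A)}"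

definition RelT :: "'a measure \<Rightarrow> 'l set \<Rightarrow> ('l \<Rightarrow> 'a \<Rightarrow> 'a measure) \<Rightarrow> 'a set set \<Rightarrow> ('a \<times> 'a) set" where
  "RelT M L \<tau> \<Lambda> = {(s,t). s \<in> space M \<and> t \<in> space M \<and>
      (\<forall>a\<in>L. \<forall>E\<in>\<Lambda>. measure (\<tau> a s) E = measure (\<tau> a t) E)}"

definition closed_sets :: "'a measure \<Rightarrow> ('a \<times> 'a) set \<Rightarrow> 'a set set" where
  "closed_sets M R = {A \<in> sets M. \<forall>x s. x \<in> A \<longrightarrow> (x, s) \<in> R \<longrightarrow> s \<in> A}"

definition G_op :: "'a measure \<Rightarrow> 'l set \<Rightarrow> ('l \<Rightarrow> 'a \<Rightarrow> 'a measure) \<Rightarrow> 'a set set \<Rightarrow> 'a set set" where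
  "G_op M L \<tau> \<Lambda> = closed_sets M (RelT M L \<tau> \<Lambda>)"

text \<open>Ordinals are modelled by elements of an arbitrary well-ordered type 'i.\<close>
definition is_limit :: "'i::wellorder \<Rightarrow> bool" where
  "is_limit \<alpha> \<longleftrightarrow> (\<exists>\<beta>. \<beta> < \<alpha>) \<and> (\<forall>\<beta><\<alpha>. \<exists>\<gamma>. \<beta> < \<gamma> \<and> \<gamma> < \<alpha>)"

text \<open>Transfinite iterates: Sigma_0 at the least element, Sigma_{b+1} = G(Sigma_b) at successors,
  Sigma_lambda = sigma(union of earlier) at limits.\<close>
definition Sigma_iter :: "'a measure \<Rightarrow> 'l set \<Rightarrow> ('l \<Rightarrow> 'a \<Rightarrow> 'a measure) \<Rightarrow> 'a set set
     \<Rightarrow> 'i::wellorder \<Rightarrow> 'a set set" where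
  "Sigma_iter M L \<tau> \<Sigma>0 = wfrec {(x, y). x < y}
     (\<lambda>f \<alpha>. if \<not> (\<exists>\<beta>. \<beta> < \<alpha>) then \<Sigma>0
            else if is_limit \<alpha> then sigma_sets (space M) (\<Union>\<beta>\<in>{\<beta>. \<beta> < \<alpha>}. f \<beta>)
            else G_op M L \<tau> (f (THE \<beta>. \<beta> < \<alpha> \<and> (\<forall>\<gamma><\<alpha>. \<gamma> \<le> \<beta>))))"

definition stable :: "'a measure \<Rightarrow> 'l set \<Rightarrow> ('l \<Rightarrow> 'a \<Rightarrow> 'a measure) \<Rightarrow> 'a set set \<Rightarrow> bool" where
  "stable M L \<tau> \<Lambda> \<longleftrightarrow> \<Lambda> \<subseteq> sets M \<and>
     (\<forall>A\<in>\<Lambda>. \<forall>r\<in>\<rat>. 0 \<le> r \<longrightarrow> r \<le> 1 \<longrightarrow> (\<forall>a\<in>L.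
        {s \<in> space M. measure (\<tau> a s) A > r} \<in> \<Lambda>))"

end

theory Submission
  imports Defs "HOL-Probability.Conditional_Expectation"
begin

text \<open>The iterates form an increasing chain with \<open>\<Sigma>\<^sub>\<alpha> \<subseteq> \<G>(\<Sigma>\<^sub>\<alpha>)\<close>; the hypothesis
  \<open>\<R>(\<Sigma>\<^sub>0) = \<R>\<^sup>T(\<Sigma>\<^sub>0)\<close> is exactly what makes this true at the start. At a limit \<open>\<lambda>\<close>
  the union \<open>U\<close> of the earlier iterates is therefore closed under intersections, and the
  level sets \<open>{s. \<tau>\<^sub>a(s,A) > r}\<close> of every \<open>A \<in> \<Sigma>\<^sub>\<beta>\<close> lie in \<open>\<Sigma>\<^sub>\<beta>\<^sub>+\<^sub>1 \<subseteq> U\<close>. So every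
  \<open>\<tau>\<^sub>a(\<cdot>,A)\<close> with \<open>A \<in> U\<close> is \<open>\<sigma>(U)\<close>-measurable, and by the \<open>\<pi>\<close>-\<open>\<lambda>\<close> theorem the same holds for
  all \<open>A \<in> \<sigma>(U) = \<Sigma>\<^sub>\<lambda>\<close>, which is stability of \<open>\<Sigma>\<^sub>\<lambda>\<close>.\<close>

lemma borel_measurable_measure_kernel_generated:
  fixes \<kappa> :: "'a \<Rightarrow> 'a measure"
  assumes \<kappa>: "\<kappa> \<in> M \<rightarrow>\<^sub>M subprob_algebra M"
    and G: "G \<subseteq> sets M" "Int_stable G" "space M \<in> G"
    and meas_G: "\<And>B. B \<in> G \<Longrightarrow> (\<lambda>s. measure (\<kappa> s) B) \<in> borel_measurable (sigma (space M) G)"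
    and A: "A \<in> sigma_sets (space M) G"
  shows "(\<lambda>s. measure (\<kappa> s) A) \<in> borel_measurable (sigma (space M) G)"
proof -
  define N where "N = sigma (space M) G"
  have G_Pow: "G \<subseteq> Pow (space M)" using G(1) sets.sets_into_space by auto
  have sets_N: "sets N = sigma_sets (space M) G" and space_N: "space N = space M"
    unfolding N_def using G_Pow by simp_all
  have N_sub: "sets N \<subseteq> sets M" unfolding sets_N using G(1) by (rule sets.sigma_sets_subset)
  have \<kappa>_s: "subprob_space (\<kappa> s)" "sets (\<kappa> s) = sets M" "space (\<kappa> s) = space M"
    if "s \<in> space M" for s
    using measurable_space[OF \<kappa> that] sets_eq_imp_space_eq by (auto simp: space_subprob_algebra)
  have subalg: "subalgebra (\<kappa> s) N" if "s \<in> space M" for s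
    unfolding subalgebra_def using \<kappa>_s[OF that] space_N N_sub by auto
  text \<open>Restricting each \<open>\<kappa> s\<close> to \<open>N\<close> turns \<open>\<kappa>\<close> into a candidate kernel on \<open>N\<close>, to which the
    generator criterion for kernel measurability applies.\<close>
  define K where "K s = restr_to_subalg (\<kappa> s) N" for s
  have K_eq: "emeasure (K s) B = ennreal (measure (\<kappa> s) B)" if "s \<in> space M" "B \<in> sets N" for s B
  proof -
    interpret subprob_space "\<kappa> s" using \<kappa>_s(1)[OF that(1)] .
    show ?thesis
      unfolding K_def using emeasure_restr_to_subalg[OF subalg[OF that(1)] that(2)]
      by (simp add: emeasure_eq_measure)
  qed
  have K_meas_G: "(\<lambda>s. emeasure (K s) B) \<in> borel_measurable N" if "B \<in> G" for B
  proof -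
    have "(\<lambda>s. ennreal (measure (\<kappa> s) B)) \<in> borel_measurable N"
      using meas_G[OF that] unfolding N_def by measurable
    moreover have "B \<in> sets N" using that sets_N by auto
    ultimately show ?thesis by (subst measurable_cong[where g="\<lambda>s. ennreal (measure (\<kappa> s) B)"])
      (simp_all add: K_eq space_N)
  qed
  have K: "K \<in> N \<rightarrow>\<^sub>M subprob_algebra N"
  proof (rule measurable_subprob_algebra_generated[OF sets_N G(2) G_Pow])
    fix s assume "s \<in> space N"
    then have s: "s \<in> space M" using space_N by simp
    show "sets (K s) = sets N" unfolding K_def by (rule sets_restr_to_subalg[OF subalg[OF s]])
    have "emeasure (K s) (space M) = ennreal (measure (\<kappa> s) (space M))"
      using K_eq[OF s] G(3) sets_N by auto
    moreover have "measure (\<kappa> s) (space M) \<le> 1"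
      using \<kappa>_s[OF s] by (metis subprob_space.subprob_measure_le_1)
    moreover have "space (K s) = space M"
      unfolding K_def space_restr_to_subalg using \<kappa>_s(3)[OF s] .
    ultimately show "subprob_space (K s)" using s by (intro subprob_spaceI) auto
  qed (use K_meas_G G(3) in auto)
  have A_N: "A \<in> sets N" using A sets_N by simp
  have "(\<lambda>s. measure (K s) A) \<in> borel_measurable N"
    using measurable_compose[OF K measurable_measure_subprob_algebra[OF A_N]] .
  moreover have "measure (K s) A = measure (\<kappa> s) A" if "s \<in> space N" for s
    using K_eq[of s A] that space_N A_N unfolding measure_def by simp
  ultimately show ?thesis unfolding N_def[symmetric] by (simp cong: measurable_cong)
qed

lemma stable_sigma_sets:
  assumes lmp: "LMP M L \<tau>"
    and G: "G \<subseteq> sets M" "Int_stable G" "space M \<in> G"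
    and levels: "\<And>A a c. A \<in> G \<Longrightarrow> a \<in> L \<Longrightarrow> {s \<in> space M. c < measure (\<tau> a s) A} \<in> G"
  shows "stable M L \<tau> (sigma_sets (space M) G)"
proof -
  have G_Pow: "G \<subseteq> Pow (space M)" using G(1) sets.sets_into_space by auto
  have meas: "(\<lambda>s. measure (\<tau> a s) A) \<in> borel_measurable (sigma (space M) G)"
    if "a \<in> L" "A \<in> sigma_sets (space M) G" for a A
  proof (rule borel_measurable_measure_kernel_generated[OF _ G _ that(2)])
    show "\<tau> a \<in> M \<rightarrow>\<^sub>M subprob_algebra M" using lmp that(1) unfolding LMP_def by blast
    show "(\<lambda>s. measure (\<tau> a s) B) \<in> borel_measurable (sigma (space M) G)" if "B \<in> G" for B
      unfolding borel_measurable_iff_greater using levels[OF that \<open>a \<in> L\<close>] G_Pow by auto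
  qed
  show ?thesis
    unfolding stable_def
  proof (intro conjI ballI allI impI)
    show "sigma_sets (space M) G \<subseteq> sets M" using G(1) by (rule sets.sigma_sets_subset)
    fix A r a assume "A \<in> sigma_sets (space M) G" "a \<in> L"
    then show "{s \<in> space M. r < measure (\<tau> a s) A} \<in> sigma_sets (space M) G"
      using meas[of a A] G_Pow unfolding borel_measurable_iff_greater by auto
  qed
qed

lemma Int_stable_UN_chain:
  fixes F :: "'i::linorder \<Rightarrow> 'a set set"
  assumes "\<And>i. i \<in> I \<Longrightarrow> algebra \<Omega> (F i)" and "mono_on I F"
  shows "Int_stable (\<Union>i\<in>I. F i)"
  unfolding Int_stable_def
proof (intro ballI)
  fix A B assume "A \<in> (\<Union>i\<in>I. F i)" "B \<in> (\<Union>i\<in>I. F i)"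
  then obtain i j where ij: "i \<in> I" "j \<in> I" "A \<in> F i" "B \<in> F j" by blast
  then have "A \<in> F (max i j)" "B \<in> F (max i j)"
    using \<open>mono_on I F\<close> by (auto simp: max_def dest: mono_onD)
  moreover have "max i j \<in> I" using ij by (simp add: max_def)
  ultimately show "A \<inter> B \<in> (\<Union>i\<in>I. F i)"
    using Int_stableD[OF algebra.Int_stable[OF assms(1)]] by blast
qed

lemma subset_closed_sets_Rel_of: "\<Lambda> \<subseteq> sets M \<Longrightarrow> \<Lambda> \<subseteq> closed_sets M (Rel_of M \<Lambda>)"
  unfolding closed_sets_def Rel_of_def by auto

lemma G_op_subset_sets: "G_op M L \<tau> \<Lambda> \<subseteq> sets M"
  unfolding G_op_def closed_sets_def by auto

lemma G_op_mono: "\<Lambda> \<subseteq> \<Lambda>' \<Longrightarrow> G_op M L \<tau> \<Lambda> \<subseteq> G_op M L \<tau> \<Lambda>'"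
  unfolding G_op_def closed_sets_def RelT_def by blast

lemma sigma_algebra_G_op: "sigma_algebra (space M) (G_op M L \<tau> \<Lambda>)"
  unfolding sigma_algebra_iff2
proof (intro conjI ballI allI impI)
  show "G_op M L \<tau> \<Lambda> \<subseteq> Pow (space M)"
    using G_op_subset_sets sets.sets_into_space by blast
  show "{} \<in> G_op M L \<tau> \<Lambda>" unfolding G_op_def closed_sets_def by auto
next
  fix A assume "A \<in> G_op M L \<tau> \<Lambda>"
  text \<open>Complements stay closed because \<open>\<R>\<^sup>T(\<Lambda>)\<close> is symmetric.\<close>
  then show "space M - A \<in> G_op M L \<tau> \<Lambda>"
    unfolding G_op_def closed_sets_def RelT_def by auto
next
  fix A :: "nat \<Rightarrow> 'a set" assume "range A \<subseteq> G_op M L \<tau> \<Lambda>"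
  moreover have "(\<Union>i. A i) \<in> sets M"
    using calculation G_op_subset_sets by blast
  ultimately show "(\<Union>i. A i) \<in> G_op M L \<tau> \<Lambda>"
    unfolding G_op_def closed_sets_def by blast
qed

lemma level_set_in_G_op:
  assumes "LMP M L \<tau>" "a \<in> L" "A \<in> \<Lambda>" "\<Lambda> \<subseteq> sets M"
  shows "{s \<in> space M. c < measure (\<tau> a s) A} \<in> G_op M L \<tau> \<Lambda>"
proof -
  have "\<tau> a \<in> M \<rightarrow>\<^sub>M subprob_algebra M" using assms(1,2) unfolding LMP_def by blast
  moreover have "A \<in> sets M" using assms(3,4) by blast
  ultimately have "(\<lambda>s. measure (\<tau> a s) A) \<in> borel_measurable M" by measurable
  then have "{s \<in> space M. c < measure (\<tau> a s) A} \<in> sets M"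
    unfolding borel_measurable_iff_greater by blast
  then show ?thesis unfolding G_op_def closed_sets_def RelT_def using assms(2,3) by auto
qed

lemma least_limit_or_successor:
  fixes \<alpha> :: "'i::wellorder"
  obtains (least) "\<not> (\<exists>\<beta>. \<beta> < \<alpha>)" | (limit) "is_limit \<alpha>"
    | (successor) p where "p < \<alpha>" "\<And>\<delta>. p < \<delta> \<Longrightarrow> \<alpha> \<le> \<delta>"
  unfolding is_limit_def by (meson not_le)

lemma successor_below_limit:
  fixes lam \<beta> :: "'i::wellorder"
  assumes "is_limit lam" "\<beta> < lam"
  obtains \<gamma> where "\<beta> < \<gamma>" "\<gamma> < lam" "\<And>\<delta>. \<beta> < \<delta> \<Longrightarrow> \<gamma> \<le> \<delta>"
proof -
  obtain \<gamma>' where "\<beta> < \<gamma>'" "\<gamma>' < lam" using assms unfolding is_limit_def by blast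
  then show thesis
    by (intro that[of "LEAST \<delta>. \<beta> < \<delta>"]) (auto intro: LeastI Least_le le_less_trans)
qed

lemma The_greatest_below:
  fixes p \<alpha> :: "'i::wellorder"
  assumes "p < \<alpha>" "\<And>\<delta>. p < \<delta> \<Longrightarrow> \<alpha> \<le> \<delta>"
  shows "(THE \<beta>. \<beta> < \<alpha> \<and> (\<forall>\<gamma><\<alpha>. \<gamma> \<le> \<beta>)) = p"
  using assms by (intro the_equality) (meson antisym leD not_le)+

lemma Sigma_iter_eq:
  "Sigma_iter M L \<tau> \<Sigma>0 (\<alpha>::'i::wellorder) =
    (if \<not> (\<exists>\<beta>. \<beta> < \<alpha>) then \<Sigma>0
     else if is_limit \<alpha> then sigma_sets (space M) (\<Union>\<beta>\<in>{\<beta>. \<beta> < \<alpha>}. Sigma_iter M L \<tau> \<Sigma>0 \<beta>)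
     else G_op M L \<tau> (Sigma_iter M L \<tau> \<Sigma>0 (THE \<beta>. \<beta> < \<alpha> \<and> (\<forall>\<gamma><\<alpha>. \<gamma> \<le> \<beta>))))"
proof -
  have pred_below: "(THE \<beta>. \<beta> < \<alpha> \<and> (\<forall>\<gamma><\<alpha>. \<gamma> \<le> \<beta>)) < \<alpha>"
    if nonleast: "\<exists>\<beta>. \<beta> < \<alpha>" and nonlimit: "\<not> is_limit \<alpha>"
  proof -
    obtain p where p: "p < \<alpha>" "\<And>\<delta>. p < \<delta> \<Longrightarrow> \<alpha> \<le> \<delta>"
      using nonleast nonlimit least_limit_or_successor[of \<alpha>] by blast
    then show ?thesis by (simp only: The_greatest_below[OF p])
  qed
  show ?thesis
    unfolding Sigma_iter_def
    by (subst wfrec[OF wf]) (auto simp: cut_apply pred_below intro!: SUP_cong)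
qed

lemma Sigma_iter_least: "\<not> (\<exists>\<beta>. \<beta> < \<alpha>) \<Longrightarrow> Sigma_iter M L \<tau> \<Sigma>0 (\<alpha>::'i::wellorder) = \<Sigma>0"
  by (subst Sigma_iter_eq) simp

lemma Sigma_iter_limit:
  "is_limit \<alpha> \<Longrightarrow>
    Sigma_iter M L \<tau> \<Sigma>0 (\<alpha>::'i::wellorder) = sigma_sets (space M) (\<Union>\<beta>\<in>{\<beta>. \<beta> < \<alpha>}. Sigma_iter M L \<tau> \<Sigma>0 \<beta>)"
  by (subst Sigma_iter_eq) (simp add: is_limit_def)

lemma Sigma_iter_successor:
  fixes \<beta> \<gamma> :: "'i::wellorder"
  assumes "\<beta> < \<gamma>" "\<And>\<delta>. \<beta> < \<delta> \<Longrightarrow> \<gamma> \<le> \<delta>"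
  shows "Sigma_iter M L \<tau> \<Sigma>0 \<gamma> = G_op M L \<tau> (Sigma_iter M L \<tau> \<Sigma>0 \<beta>)"
proof -
  have "\<not> is_limit \<gamma>" using assms unfolding is_limit_def by (meson leD)
  then show ?thesis using assms(1) The_greatest_below[OF assms] by (subst Sigma_iter_eq) auto
qed

lemma Sigma_iter_subset_sets:
  assumes "\<Sigma>0 \<subseteq> sets M"
  shows "Sigma_iter M L \<tau> \<Sigma>0 (\<alpha>::'i::wellorder) \<subseteq> sets M"
proof (induction \<alpha> rule: less_induct)
  case (less \<alpha>)
  show ?case
  proof (cases rule: least_limit_or_successor[of \<alpha>])
    case limit
    then show ?thesis
      unfolding Sigma_iter_limit[OF limit] using less by (intro sets.sigma_sets_subset UN_least) auto
  qed (use assms G_op_subset_sets in \<open>simp_all add: Sigma_iter_least Sigma_iter_successor\<close>)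
qed

lemma sigma_algebra_Sigma_iter:
  assumes "sigma_algebra (space M) \<Sigma>0" "\<Sigma>0 \<subseteq> sets M"
  shows "sigma_algebra (space M) (Sigma_iter M L \<tau> \<Sigma>0 (\<alpha>::'i::wellorder))"
proof (cases rule: least_limit_or_successor[of \<alpha>])
  case limit
  have "(\<Union>\<beta>\<in>{\<beta>. \<beta> < \<alpha>}. Sigma_iter M L \<tau> \<Sigma>0 \<beta>) \<subseteq> Pow (space M)"
    using Sigma_iter_subset_sets[OF assms(2)] sets.sets_into_space by blast
  then show ?thesis unfolding Sigma_iter_limit[OF limit] by (rule sigma_algebra_sigma_sets)
qed (use assms sigma_algebra_G_op in \<open>simp_all add: Sigma_iter_least Sigma_iter_successor\<close>)

lemma Sigma_iter_increasing:
  assumes "\<Sigma>0 \<subseteq> sets M" "Rel_of M \<Sigma>0 = RelT M L \<tau> \<Sigma>0"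
  shows "Sigma_iter M L \<tau> \<Sigma>0 \<alpha> \<subseteq> G_op M L \<tau> (Sigma_iter M L \<tau> \<Sigma>0 \<alpha>) \<and>
    (\<forall>\<beta><\<alpha>. Sigma_iter M L \<tau> \<Sigma>0 \<beta> \<subseteq> Sigma_iter M L \<tau> \<Sigma>0 (\<alpha>::'i::wellorder))"
proof (induction \<alpha> rule: less_induct)
  case (less \<alpha>)
  let ?S = "Sigma_iter M L \<tau> \<Sigma>0" and ?G = "G_op M L \<tau>"
  show ?case
  proof (cases rule: least_limit_or_successor[of \<alpha>])
    case least
    then show ?thesis
      using subset_closed_sets_Rel_of[OF assms(1)] by (simp add: Sigma_iter_least G_op_def assms(2))
  next
    case limit
    have below: "?S \<beta> \<subseteq> ?S \<alpha>" if "\<beta> < \<alpha>" for \<beta>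
      using that by (auto simp: Sigma_iter_limit[OF limit])
    have "?S \<beta> \<subseteq> ?G (?S \<alpha>)" if "\<beta> < \<alpha>" for \<beta>
      using less that below G_op_mono by blast
    then have "?S \<alpha> \<subseteq> ?G (?S \<alpha>)"
      unfolding Sigma_iter_limit[OF limit, of M L \<tau> \<Sigma>0]
      by (intro sigma_algebra.sigma_sets_subset[OF sigma_algebra_G_op] UN_least)
        (simp add: Sigma_iter_limit[OF limit, symmetric])
    then show ?thesis using below by blast
  next
    case (successor p)
    have S\<alpha>: "?S \<alpha> = ?G (?S p)" using successor by (rule Sigma_iter_successor)
    have IH: "?S p \<subseteq> ?G (?S p)" "\<forall>\<beta><p. ?S \<beta> \<subseteq> ?S p" using less successor(1) by auto
    have "?S \<beta> \<subseteq> ?S \<alpha>" if "\<beta> < \<alpha>" for \<beta>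
      using successor(2)[of \<beta>] that IH S\<alpha> by (cases "\<beta> < p") (auto simp: not_less_iff_gr_or_eq)
    moreover have "?S \<alpha> \<subseteq> ?G (?S \<alpha>)" unfolding S\<alpha> using IH(1) S\<alpha> by (simp add: G_op_mono)
    ultimately show ?thesis by blast
  qed
qed

lemma Sigma_iter_mono:
  assumes "\<Sigma>0 \<subseteq> sets M" "Rel_of M \<Sigma>0 = RelT M L \<tau> \<Sigma>0"
  shows "mono (Sigma_iter M L \<tau> \<Sigma>0 :: 'i::wellorder \<Rightarrow> _)"
proof (rule monoI)
  fix \<beta> \<alpha> :: 'i assume "\<beta> \<le> \<alpha>"
  then show "Sigma_iter M L \<tau> \<Sigma>0 \<beta> \<subseteq> Sigma_iter M L \<tau> \<Sigma>0 \<alpha>"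
    using Sigma_iter_increasing[OF assms, of \<alpha>] by (cases "\<beta> = \<alpha>") auto
qed

lemma level_set_in_Sigma_iter_below_limit:
  assumes "LMP M L \<tau>" "\<Sigma>0 \<subseteq> sets M" "is_limit lam" "\<beta> < lam" "a \<in> L"
    and "A \<in> Sigma_iter M L \<tau> \<Sigma>0 \<beta>"
  shows "\<exists>\<gamma><lam. {s \<in> space M. c < measure (\<tau> a s) A} \<in> Sigma_iter M L \<tau> \<Sigma>0 (\<gamma>::'i::wellorder)"
proof -
  obtain \<gamma> where "\<beta> < \<gamma>" "\<gamma> < lam" and succ: "\<And>\<delta>. \<beta> < \<delta> \<Longrightarrow> \<gamma> \<le> \<delta>"
    using successor_below_limit[OF assms(3,4)] by blast
  have "{s \<in> space M. c < measure (\<tau> a s) A} \<in> G_op M L \<tau> (Sigma_iter M L \<tau> \<Sigma>0 \<beta>)"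
    by (rule level_set_in_G_op[OF assms(1,5,6) Sigma_iter_subset_sets[OF assms(2)]])
  then show ?thesis using \<open>\<gamma> < lam\<close> by (auto simp: Sigma_iter_successor[OF \<open>\<beta> < \<gamma>\<close> succ])
qed

theorem theorem3p15:
  fixes M :: "'a measure" and L :: "'l set" and \<tau> :: "'l \<Rightarrow> 'a \<Rightarrow> 'a measure"
    and \<Sigma>0 :: "'a set set" and lam :: "'i::wellorder"
  assumes "LMP M L \<tau>"
    and "sigma_algebra (space M) \<Sigma>0" and "\<Sigma>0 \<subseteq> sets M"
    and "Rel_of M \<Sigma>0 = RelT M L \<tau> \<Sigma>0"
    and "is_limit lam"
  shows "sigma_algebra (space M) (Sigma_iter M L \<tau> \<Sigma>0 lam) \<and> stable M L \<tau> (Sigma_iter M L \<tau> \<Sigma>0 lam)"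
proof -
  let ?S = "Sigma_iter M L \<tau> \<Sigma>0 :: 'i \<Rightarrow> _"
  let ?U = "\<Union>\<beta>\<in>{\<beta>. \<beta> < lam}. ?S \<beta>"
  have algebras: "algebra (space M) (?S \<beta>)" for \<beta>
    using sigma_algebra_Sigma_iter[OF assms(2,3)] by (rule sigma_algebra.axioms(1))
  have U_sets: "?U \<subseteq> sets M" using Sigma_iter_subset_sets[OF assms(3)] by (rule UN_least)
  have U_Int: "Int_stable ?U"
    using algebras mono_on_subset[OF Sigma_iter_mono[OF assms(3,4)] subset_UNIV] by (rule Int_stable_UN_chain)
  obtain \<beta>0 where "\<beta>0 < lam" using assms(5) unfolding is_limit_def by blast
  then have U_space: "space M \<in> ?U" using algebra.top[OF algebras] by blast
  have U_levels: "{s \<in> space M. c < measure (\<tau> a s) A} \<in> ?U" if "A \<in> ?U" "a \<in> L" for A a c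
    using that level_set_in_Sigma_iter_below_limit[OF assms(1,3,5)] by blast
  have "stable M L \<tau> (sigma_sets (space M) ?U)"
    using stable_sigma_sets[OF assms(1) U_sets U_Int U_space U_levels] .
  moreover have "?S lam = sigma_sets (space M) ?U" by (rule Sigma_iter_limit[OF assms(5)])
  ultimately show ?thesis using sigma_algebra_Sigma_iter[OF assms(2,3), of L \<tau> lam] by simp
qed

end
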